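(* Let $n,d\ge1$. For $k\ge1$ let $\mathbf M_k\in\mathbb R^{n\times n}$ be invertible; for $k\ge0$ let $\mathbf H_k\in\mathbb R^{d\times n}$, $\mathbf R_k\in\mathbb R^{d\times d}$ symmetric positive definite and ${\boldsymbol\Omega}_k=\mathbf H_k^{\mathrm T}\mathbf R_k^{-1}\mathbf H_k$. Let $\mathbf M_{k:l}=\mathbf M_k\cdots\mathbf M_{l+1}$ ($\mathbf M_{k:k}=\mathbf I_n$), let $\mathbf P_0$ be symmetric positive semi-definite and $\mathbf P_{k+1}=\mathbf M_{k+1}(\mathbf I_n+\mathbf P_k{\boldsymbol\Omega}_k)^{-1}\mathbf P_k\mathbf M_{k+1}^{\mathrm T}$ for $k\ge0$. Let ${\boldsymbol\Gamma}_k=\sum_{l=0}^{k-1}\mathbf M_{k:l}^{-\mathrm T}{\boldsymbol\Omega}_l\mathbf M_{k:l}^{-1}$. If $\det({\boldsymbol\Gamma}_k)\neq0$, then $\mathbf P_k\le{\boldsymbol\Gamma}_k^{-1}$, and hence $$\mathbf P_k\le\min\big\{\mathbf M_{k:0}\mathbf P_0\mathbf M_{k:0}^{\mathrm T},\,{\boldsymbol\Gamma}_k^{-1}\big\}.$$ Consequently, if there is a symmetric positive definite $\mathbf L$ with ${\boldsymbol\Gamma}_k\ge\mathbf L$, then $\mathbf P_k\le\mathbf L^{-1}$.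
   Context: $\mathbf A\le\mathbf B$ denotes the Loewner order (${\mathbf x}^{\mathrm T}\mathbf A{\mathbf x}\le{\mathbf x}^{\mathrm T}\mathbf B{\mathbf x}$ for all ${\mathbf x}$). For symmetric positive semi-definite $\mathbf A,\mathbf B,\mathbf C$, the statement $\mathbf A\le\min\{\mathbf B,\mathbf C\}$ means ${\mathbf x}^{\mathrm T}\mathbf A{\mathbf x}\le\min\{{\mathbf x}^{\mathrm T}\mathbf B{\mathbf x},{\mathbf x}^{\mathrm T}\mathbf C{\mathbf x}\}$ for all ${\mathbf x}\in\mathbb R^n$. *)

theory Defs
  imports "HOL-Analysis.Analysis"
begin

definition loewner_le :: "real^'n^'n \<Rightarrow> real^'n^'n \<Rightarrow> bool" where
  "loewner_le A B \<longleftrightarrow> (\<forall>x::real^'n. x \<bullet> (A *v x) \<le> x \<bullet> (B *v x))"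

definition sym_mat :: "real^'n^'n \<Rightarrow> bool" where
  "sym_mat A \<longleftrightarrow> transpose A = A"

definition pos_def :: "real^'n^'n \<Rightarrow> bool" where
  "pos_def A \<longleftrightarrow> sym_mat A \<and> (\<forall>x::real^'n. x \<noteq> 0 \<longrightarrow> x \<bullet> (A *v x) > 0)"

definition pos_semidef :: "real^'n^'n \<Rightarrow> bool" where
  "pos_semidef A \<longleftrightarrow> sym_mat A \<and> (\<forall>x::real^'n. x \<bullet> (A *v x) \<ge> 0)"

definition Omega :: "(nat \<Rightarrow> real^'n^'d) \<Rightarrow> (nat \<Rightarrow> real^'d^'d) \<Rightarrow> nat \<Rightarrow> real^'n^'n" where
  "Omega H R k = transpose (H k) ** matrix_inv (R k) ** H k"

text \<open>Propagator M_{k:l} = M_k ... M_{l+1}, with M_{k:k} = I (and I for k < l).\<close>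
fun mprod :: "(nat \<Rightarrow> real^'n^'n) \<Rightarrow> nat \<Rightarrow> nat \<Rightarrow> real^'n^'n" where
  "mprod M 0 l = mat 1"
| "mprod M (Suc k) l = (if Suc k \<le> l then mat 1 else M (Suc k) ** mprod M k l)"

fun Pseq :: "(nat \<Rightarrow> real^'n^'n) \<Rightarrow> (nat \<Rightarrow> real^'n^'d) \<Rightarrow> (nat \<Rightarrow> real^'d^'d)
              \<Rightarrow> real^'n^'n \<Rightarrow> nat \<Rightarrow> real^'n^'n" where
  "Pseq M H R P0 0 = P0"
| "Pseq M H R P0 (Suc k) =
     M (Suc k) ** matrix_inv (mat 1 + Pseq M H R P0 k ** Omega H R k)
       ** Pseq M H R P0 k ** transpose (M (Suc k))"

definition Gamma :: "(nat \<Rightarrow> real^'n^'n) \<Rightarrow> (nat \<Rightarrow> real^'n^'d) \<Rightarrow> (nat \<Rightarrow> real^'d^'d)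
              \<Rightarrow> nat \<Rightarrow> real^'n^'n" where
  "Gamma M H R k = (\<Sum>l<k. transpose (matrix_inv (mprod M k l)) ** Omega H R l
                              ** matrix_inv (mprod M k l))"

end

theory Submission
  imports Defs
begin

text \<open>
  The heart of the proof is the invariant \<open>P\<^sub>k \<Gamma>\<^sub>k P\<^sub>k \<le> P\<^sub>k\<close>, which holds trivially
  for \<open>k = 0\<close> (\<open>\<Gamma>\<^sub>0 = 0\<close>) and is preserved by the recursion: the analysis step
  \<open>A = (I + P \<Omega>)\<^sup>-\<^sup>1 P\<close> turns \<open>P \<Gamma> P \<le> P\<close> into \<open>A (\<Gamma> + \<Omega>) A \<le> A\<close>, and the forecast step
  conjugates both sides by \<open>M\<^sub>k\<^sub>+\<^sub>1\<close>, exactly as \<open>\<Gamma>\<^sub>k\<^sub>+\<^sub>1 = M\<^sup>-\<^sup>T\<^sub>k\<^sub>+\<^sub>1 (\<Gamma>\<^sub>k + \<Omega>\<^sub>k) M\<^sup>-\<^sup>1\<^sub>k\<^sub>+\<^sub>1\<close>.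
  If \<open>\<Gamma>\<close> is invertible, the Cauchy-Schwarz inequality for the semi-inner product
  given by \<open>\<Gamma>\<close> yields \<open>(x\<^sup>T P x)\<^sup>2 = ((P x)\<^sup>T \<Gamma> (\<Gamma>\<^sup>-\<^sup>1 x))\<^sup>2 \<le> (x\<^sup>T P x)(x\<^sup>T \<Gamma>\<^sup>-\<^sup>1 x)\<close>,
  that is \<open>P \<le> \<Gamma>\<^sup>-\<^sup>1\<close>; the same argument applies to any \<open>L \<le> \<Gamma>\<close>, since
  \<open>P L P \<le> P \<Gamma> P \<le> P\<close>.
\<close>

declare transpose_matrix_vector [simp del]

lemma matrix_inv_right:
  fixes A :: "real^'n^'n"
  assumes "invertible A"
  shows "A ** matrix_inv A = mat 1"
  using someI_ex[OF assms[unfolded invertible_def]] unfolding matrix_inv_def by auto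

lemma matrix_inv_left:
  fixes A :: "real^'n^'n"
  assumes "invertible A"
  shows "matrix_inv A ** A = mat 1"
  using someI_ex[OF assms[unfolded invertible_def]] unfolding matrix_inv_def by auto

lemma matrix_inv_unique:
  fixes A B :: "real^'n^'n"
  assumes "A ** B = mat 1"
  shows "matrix_inv A = B"
proof -
  have "invertible A"
    using assms matrix_left_right_inverse invertible_def by blast
  then have "matrix_inv A = (matrix_inv A ** A) ** B"
    by (metis assms matrix_mul_assoc matrix_mul_rid)
  then show ?thesis
    using matrix_inv_left[OF \<open>invertible A\<close>] by (simp add: matrix_mul_lid)
qed

lemma matrix_inv_mat_1: "matrix_inv (mat 1 :: real^'n^'n) = mat 1"
  by (simp add: matrix_inv_unique matrix_mul_lid)

lemma matrix_inv_transpose: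
  fixes A :: "real^'n^'n"
  assumes "invertible A"
  shows "matrix_inv (transpose A) = transpose (matrix_inv A)"
  by (metis matrix_inv_unique matrix_inv_left[OF assms] matrix_transpose_mul transpose_mat)

lemma matrix_inv_mult:
  fixes A B :: "real^'n^'n"
  assumes "invertible A" "invertible B"
  shows "matrix_inv (A ** B) = matrix_inv B ** matrix_inv A"
proof (rule matrix_inv_unique)
  have "A ** B ** (matrix_inv B ** matrix_inv A) = A ** (B ** matrix_inv B) ** matrix_inv A"
    by (simp add: matrix_mul_assoc)
  also have "\<dots> = mat 1"
    by (simp add: matrix_inv_right assms matrix_mul_rid)
  finally show "A ** B ** (matrix_inv B ** matrix_inv A) = mat 1" .
qed

lemma matrix_inv_vector_cancel:
  fixes A :: "real^'n^'n"
  assumes "invertible A"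
  shows "A *v (matrix_inv A *v x) = x" and "matrix_inv A *v (A *v x) = x"
  by (simp_all add: matrix_vector_mul_assoc matrix_inv_right matrix_inv_left assms
      matrix_vector_mul_lid)

lemma inner_matrix_vector_transpose: "x \<bullet> ((A::real^'n^'m) *v y) = (transpose A *v x) \<bullet> y"
  by (simp add: dot_lmul_matrix transpose_matrix_vector)

lemma sym_mat_inner: "sym_mat (P::real^'n^'n) \<Longrightarrow> x \<bullet> (P *v y) = (P *v x) \<bullet> y"
  by (metis inner_matrix_vector_transpose sym_mat_def)

lemma quadratic_form_congruence:
  fixes C :: "real^'n^'m" and X :: "real^'n^'n"
  shows "x \<bullet> ((C ** X ** transpose C) *v x) = (transpose C *v x) \<bullet> (X *v (transpose C *v x))"
  by (simp add: matrix_vector_mul_assoc[symmetric] inner_matrix_vector_transpose)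

lemma quadratic_form_sandwich:
  fixes P X :: "real^'n^'n"
  assumes "sym_mat P"
  shows "x \<bullet> ((P ** X ** P) *v x) = (P *v x) \<bullet> (X *v (P *v x))"
  using quadratic_form_congruence[of x P X] assms by (simp add: sym_mat_def)

lemma sym_mat_congruence: "sym_mat X \<Longrightarrow> sym_mat (C ** X ** transpose C)"
  by (simp add: sym_mat_def matrix_transpose_mul matrix_mul_assoc)

lemma pos_semidef_congruence:
  fixes C :: "real^'n^'m"
  assumes "pos_semidef X"
  shows "pos_semidef (C ** X ** transpose C)"
  using assms by (simp add: pos_semidef_def sym_mat_congruence quadratic_form_congruence)

lemma loewner_le_congruence:
  fixes C :: "real^'n^'m"
  assumes "loewner_le X Y"
  shows "loewner_le (C ** X ** transpose C) (C ** Y ** transpose C)"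
  using assms by (simp add: loewner_le_def quadratic_form_congruence)

lemma loewner_le_trans: "loewner_le A B \<Longrightarrow> loewner_le B C \<Longrightarrow> loewner_le A C"
  unfolding loewner_le_def by (meson order_trans)

lemma sum_matrix_vector_mult:
  fixes f :: "'a \<Rightarrow> real^'n^'m"
  shows "sum f S *v x = (\<Sum>l\<in>S. f l *v x)"
  by (induction S rule: infinite_finite_induct)
     (simp_all add: matrix_vector_mult_add_rdistrib)

lemma transpose_add: "transpose (A + B) = transpose A + transpose (B :: real^'n^'m)"
  by (simp add: transpose_def vec_eq_iff)

lemma transpose_sum: "transpose (sum f S) = (\<Sum>l\<in>S. transpose (f l :: real^'n^'m))"
  by (simp add: transpose_def vec_eq_iff)

lemma pos_semidef_sum:
  assumes "\<And>l. l \<in> S \<Longrightarrow> pos_semidef (f l :: real^'n^'n)"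
  shows "pos_semidef (sum f S)"
  using assms
  by (auto simp: pos_semidef_def sym_mat_def transpose_sum sum_matrix_vector_mult
      inner_sum_right intro: sum.cong sum_nonneg)

lemma pos_semidef_cauchy_schwarz:
  fixes G :: "real^'n^'n"
  assumes "pos_semidef G"
  shows "(u \<bullet> (G *v v))\<^sup>2 \<le> (u \<bullet> (G *v u)) * (v \<bullet> (G *v v))"
proof -
  define a b c where "a = u \<bullet> (G *v u)" and "b = u \<bullet> (G *v v)" and "c = v \<bullet> (G *v v)"
  have psd: "0 \<le> z \<bullet> (G *v z)" for z
    using assms by (simp add: pos_semidef_def)
  have "v \<bullet> (G *v u) = b"
    using sym_mat_inner[of G v u] assms by (simp add: pos_semidef_def b_def inner_commute)
  then have quadratic: "0 \<le> a + 2 * t * b + t\<^sup>2 * c" for t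
    using psd[of "u + t *\<^sub>R v"]
    by (simp add: matrix_vector_right_distrib matrix_vector_mult_scaleR inner_add_left
        inner_add_right a_def b_def c_def algebra_simps power2_eq_square)
  show ?thesis
  proof (cases "c = 0")
    case True
    have "b = 0"
    proof (rule ccontr)
      assume "b \<noteq> 0"
      then show False
        using quadratic[of "- (a + 1) / (2 * b)"] True by (simp add: field_simps)
    qed
    then show ?thesis using True b_def c_def by simp
  next
    case False
    then have "c > 0" using psd[of v] c_def by simp
    then have "b\<^sup>2 \<le> a * c"
      using quadratic[of "- b / c"] by (simp add: field_simps power2_eq_square)
    then show ?thesis using a_def b_def c_def by simp
  qed
qed

lemma pos_semidef_form_eq_0_imp_mult_eq_0:
  fixes G :: "real^'n^'n"
  assumes "pos_semidef G" and "v \<bullet> (G *v v) = 0"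
  shows "G *v v = 0"
  using pos_semidef_cauchy_schwarz[OF assms(1), of "G *v v" v] assms(2) by simp

lemma pos_def_imp_pos_semidef: "pos_def A \<Longrightarrow> pos_semidef A"
  unfolding pos_def_def pos_semidef_def by (metis order.refl inner_zero_left less_imp_le)

lemma pos_def_invertible:
  fixes A :: "real^'n^'n"
  assumes "pos_def A"
  shows "invertible A"
  unfolding invertible_left_inverse matrix_left_invertible_ker
  using assms by (force simp: pos_def_def)

lemma pos_semidef_matrix_inv:
  fixes A :: "real^'n^'n"
  assumes "pos_semidef A" and "invertible A"
  shows "pos_semidef (matrix_inv A)"
  unfolding pos_semidef_def
proof
  show "sym_mat (matrix_inv A)"
    using assms matrix_inv_transpose[OF assms(2)] by (simp add: pos_semidef_def sym_mat_def)
  show "\<forall>y. 0 \<le> y \<bullet> (matrix_inv A *v y)"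
  proof
    fix y
    define z where "z = matrix_inv A *v y"
    have "y \<bullet> (matrix_inv A *v y) = z \<bullet> (A *v z)"
      by (simp add: z_def matrix_inv_vector_cancel assms inner_commute)
    then show "0 \<le> y \<bullet> (matrix_inv A *v y)"
      using assms(1) by (simp add: pos_semidef_def)
  qed
qed

subsection \<open>The analysis and forecast steps\<close>

definition analysis_cov :: "real^'n^'n \<Rightarrow> real^'n^'n \<Rightarrow> real^'n^'n" where
  "analysis_cov P Om = matrix_inv (mat 1 + P ** Om) ** P"

lemma invertible_mat_1_plus_pos_semidef_mult:
  fixes P Om :: "real^'n^'n"
  assumes P: "pos_semidef P" and Om: "pos_semidef Om"
  shows "invertible (mat 1 + P ** Om)"
  unfolding invertible_left_inverse matrix_left_invertible_ker
proof (intro allI impI)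
  fix v assume "(mat 1 + P ** Om) *v v = 0"
  then have v: "v = - (P *v (Om *v v))"
    by (simp add: matrix_vector_mult_add_rdistrib matrix_vector_mul_assoc
        matrix_vector_mul_lid eq_neg_iff_add_eq_0)
  then have "v \<bullet> (Om *v v) = - ((Om *v v) \<bullet> (P *v (Om *v v)))"
    by (metis inner_commute inner_minus_right)
  then have "v \<bullet> (Om *v v) = 0"
    using P Om by (smt (verit) pos_semidef_def)
  then have "Om *v v = 0"
    by (rule pos_semidef_form_eq_0_imp_mult_eq_0[OF Om])
  then show "v = 0"
    using v by (metis matrix_vector_mult_0_right neg_equal_0_iff_equal)
qed

text \<open>
  With \<open>K = I + P \<Omega>\<close> and \<open>u = K\<^sup>-\<^sup>T x\<close> we get \<open>x = K\<^sup>T u = u + \<Omega> P u\<close> and \<open>A x = A\<^sup>T x = P u\<close>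
  for \<open>A = K\<^sup>-\<^sup>1 P\<close>; all quadratic forms below are computed in the coordinate \<open>u\<close>.
\<close>
lemma analysis_cov_coordinates:
  fixes P Om :: "real^'n^'n" and x :: "real^'n"
  assumes P: "pos_semidef P" and Om: "pos_semidef Om"
  defines "u \<equiv> transpose (matrix_inv (mat 1 + P ** Om)) *v x"
  shows "x = u + Om *v (P *v u)"
    and "analysis_cov P Om *v x = P *v u"
    and "transpose (analysis_cov P Om) *v x = P *v u"
proof -
  define K where "K = mat 1 + P ** Om"
  have K: "invertible K"
    using invertible_mat_1_plus_pos_semidef_mult[OF P Om] by (simp add: K_def)
  have KT: "transpose K = mat 1 + Om ** P"
    using P Om by (simp add: K_def transpose_add matrix_transpose_mul pos_semidef_def sym_mat_def)
  have "transpose K *v u = x"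
    using matrix_inv_vector_cancel(1)[OF transpose_invertible[OF K], of x]
    by (simp add: u_def K_def matrix_inv_transpose[OF K[unfolded K_def]])
  then show x: "x = u + Om *v (P *v u)"
    by (simp add: KT matrix_vector_mult_add_rdistrib matrix_vector_mul_assoc matrix_vector_mul_lid)
  have "P *v x = K *v (P *v u)"
    unfolding x K_def
    by (simp add: matrix_vector_mult_add_rdistrib matrix_vector_right_distrib
        matrix_vector_mul_assoc[symmetric] matrix_vector_mul_lid)
  then show "analysis_cov P Om *v x = P *v u"
    using matrix_inv_vector_cancel(2)[OF K, of "P *v u"]
    by (simp add: analysis_cov_def K_def matrix_vector_mul_assoc[symmetric])
  show "transpose (analysis_cov P Om) *v x = P *v u"
    using P by (simp add: analysis_cov_def u_def matrix_transpose_mul pos_semidef_def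
        sym_mat_def matrix_vector_mul_assoc)
qed

lemma analysis_cov_forms:
  fixes P Om :: "real^'n^'n" and x :: "real^'n"
  assumes P: "pos_semidef P" and Om: "pos_semidef Om"
  defines "u \<equiv> transpose (matrix_inv (mat 1 + P ** Om)) *v x"
  shows "x \<bullet> (analysis_cov P Om *v x) = u \<bullet> (P *v u) + (P *v u) \<bullet> (Om *v (P *v u))"
    and "x \<bullet> (P *v x) = u \<bullet> (P *v u) + 2 * ((P *v u) \<bullet> (Om *v (P *v u)))
          + (Om *v (P *v u)) \<bullet> (P *v (Om *v (P *v u)))"
proof -
  note x = analysis_cov_coordinates(1,2)[OF P Om, of x, folded u_def]
  have sP: "u \<bullet> (P *v z) = (P *v u) \<bullet> z" for u z
    using P sym_mat_inner[of P] by (simp add: pos_semidef_def)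
  have sOm: "(Om *v z) \<bullet> y = z \<bullet> (Om *v y)" for z y
    using Om sym_mat_inner[of Om z y] by (simp add: pos_semidef_def)
  show "x \<bullet> (analysis_cov P Om *v x) = u \<bullet> (P *v u) + (P *v u) \<bullet> (Om *v (P *v u))"
    by (subst (1) x(1)) (simp only: x(2) inner_add_left sOm)
  define w where "w = Om *v (P *v u)"
  have "x \<bullet> (P *v x) = u \<bullet> (P *v u) + u \<bullet> (P *v w) + w \<bullet> (P *v u) + w \<bullet> (P *v w)"
    by (subst (1 2) x(1)) (simp add: w_def matrix_vector_right_distrib inner_add_left inner_add_right)
  moreover have "u \<bullet> (P *v w) = (P *v u) \<bullet> (Om *v (P *v u))"
    using sP by (simp add: w_def)
  moreover have "w \<bullet> (P *v u) = (P *v u) \<bullet> (Om *v (P *v u))"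
    by (simp add: w_def inner_commute)
  ultimately show "x \<bullet> (P *v x) = u \<bullet> (P *v u) + 2 * ((P *v u) \<bullet> (Om *v (P *v u)))
          + (Om *v (P *v u)) \<bullet> (P *v (Om *v (P *v u)))"
    by (simp add: w_def)
qed

lemma pos_semidef_analysis_cov:
  assumes P: "pos_semidef P" and Om: "pos_semidef Om"
  shows "pos_semidef (analysis_cov P Om)"
  unfolding pos_semidef_def sym_mat_def
proof
  show "transpose (analysis_cov P Om) = analysis_cov P Om"
    by (metis analysis_cov_coordinates(2,3)[OF P Om] matrix_eq)
  show "\<forall>x. 0 \<le> x \<bullet> (analysis_cov P Om *v x)"
  proof
    fix x
    define u where "u = transpose (matrix_inv (mat 1 + P ** Om)) *v x"
    show "0 \<le> x \<bullet> (analysis_cov P Om *v x)"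
      using analysis_cov_forms(1)[OF P Om, of x, folded u_def] P Om
      by (simp add: pos_semidef_def add_nonneg_nonneg)
  qed
qed

lemma analysis_cov_le:
  assumes P: "pos_semidef P" and Om: "pos_semidef Om"
  shows "loewner_le (analysis_cov P Om) P"
  unfolding loewner_le_def
proof
  fix x
  define u where "u = transpose (matrix_inv (mat 1 + P ** Om)) *v x"
  have "0 \<le> (P *v u) \<bullet> (Om *v (P *v u))" "0 \<le> (Om *v (P *v u)) \<bullet> (P *v (Om *v (P *v u)))"
    using P Om by (simp_all add: pos_semidef_def)
  then show "x \<bullet> (analysis_cov P Om *v x) \<le> x \<bullet> (P *v x)"
    using analysis_cov_forms[OF P Om, of x, folded u_def] by linarith
qed

lemma analysis_cov_information:
  assumes P: "pos_semidef P" and Om: "pos_semidef Om"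
    and info: "loewner_le (P ** G ** P) P"
  shows "loewner_le (analysis_cov P Om ** (G + Om) ** analysis_cov P Om) (analysis_cov P Om)"
  unfolding loewner_le_def
proof
  fix x
  define A u where "A = analysis_cov P Om"
    and "u = transpose (matrix_inv (mat 1 + P ** Om)) *v x"
  have Ax: "A *v x = P *v u"
    using analysis_cov_coordinates(2)[OF P Om, of x] by (simp add: A_def u_def)
  have "x \<bullet> ((A ** (G + Om) ** A) *v x) = (A *v x) \<bullet> ((G + Om) *v (A *v x))"
    using pos_semidef_analysis_cov[OF P Om] by (simp add: A_def quadratic_form_sandwich pos_semidef_def)
  also have "\<dots> = (P *v u) \<bullet> (G *v (P *v u)) + (P *v u) \<bullet> (Om *v (P *v u))"
    by (simp add: Ax matrix_vector_mult_add_rdistrib inner_add_right)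
  also have "\<dots> \<le> u \<bullet> (P *v u) + (P *v u) \<bullet> (Om *v (P *v u))"
    using info P by (simp add: loewner_le_def quadratic_form_sandwich pos_semidef_def)
  also have "\<dots> = x \<bullet> (A *v x)"
    using analysis_cov_forms(1)[OF P Om, of x] by (simp add: A_def u_def)
  finally show "x \<bullet> ((A ** (G + Om) ** A) *v x) \<le> x \<bullet> (A *v x)" .
qed

lemma forecast_information:
  fixes C A G G' :: "real^'n^'n"
  assumes C: "invertible C" and A: "sym_mat A" and info: "loewner_le (A ** G ** A) A"
    and G': "\<And>x. x \<bullet> (G' *v x) = (matrix_inv C *v x) \<bullet> (G *v (matrix_inv C *v x))"
  shows "loewner_le (C ** A ** transpose C ** G' ** (C ** A ** transpose C)) (C ** A ** transpose C)"
  unfolding loewner_le_def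
proof
  fix y
  define z where "z = transpose C *v y"
  have "matrix_inv C *v ((C ** A ** transpose C) *v y) = A *v z"
    by (simp add: z_def matrix_vector_mul_assoc[symmetric] matrix_inv_vector_cancel(2)[OF C])
  then have "y \<bullet> ((C ** A ** transpose C ** G' ** (C ** A ** transpose C)) *v y)
      = (A *v z) \<bullet> (G *v (A *v z))"
    using sym_mat_congruence[OF A, of C] by (simp add: quadratic_form_sandwich G')
  also have "\<dots> \<le> z \<bullet> (A *v z)"
    using info A by (simp add: loewner_le_def quadratic_form_sandwich)
  also have "\<dots> = y \<bullet> ((C ** A ** transpose C) *v y)"
    by (simp add: z_def quadratic_form_congruence)
  finally show "y \<bullet> ((C ** A ** transpose C ** G' ** (C ** A ** transpose C)) *v y)
      \<le> y \<bullet> ((C ** A ** transpose C) *v y)" .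
qed

lemma pos_semidef_Omega: "pos_def (R k) \<Longrightarrow> pos_semidef (Omega H R k)"
  using pos_semidef_congruence[of "matrix_inv (R k)" "transpose (H k)"]
  by (simp add: Omega_def pos_semidef_matrix_inv pos_def_imp_pos_semidef pos_def_invertible)

lemma pos_semidef_Gamma:
  assumes "\<And>j. pos_def (R j)"
  shows "pos_semidef (Gamma M H R k)"
  unfolding Gamma_def
  using pos_semidef_congruence[OF pos_semidef_Omega[OF assms], of "transpose _"]
  by (intro pos_semidef_sum) simp

lemma invertible_mprod:
  assumes "\<And>j. j \<ge> 1 \<Longrightarrow> invertible (M j)"
  shows "invertible (mprod M k l)"
proof (induction k)
  case (Suc k)
  then show ?case
    using invertible_mult[OF assms[of "Suc k"] Suc.IH] by (simp add: invertible_def)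
qed (auto simp: invertible_def)

lemma mprod_self: "mprod M k k = mat 1"
  by (cases k) auto

lemma Gamma_form:
  "x \<bullet> (Gamma M H R k *v x) = (\<Sum>l<k. (matrix_inv (mprod M k l) *v x) \<bullet>
        (Omega H R l *v (matrix_inv (mprod M k l) *v x)))"
  unfolding Gamma_def
  by (simp add: sum_matrix_vector_mult inner_sum_right matrix_vector_mul_assoc[symmetric]
      inner_matrix_vector_transpose)

lemma Gamma_Suc_form:
  assumes M: "\<And>j. j \<ge> 1 \<Longrightarrow> invertible (M j)"
  shows "x \<bullet> (Gamma M H R (Suc k) *v x) =
     (matrix_inv (M (Suc k)) *v x) \<bullet> ((Gamma M H R k + Omega H R k) *v (matrix_inv (M (Suc k)) *v x))"
proof -
  have "matrix_inv (M (Suc k) ** mprod M k l) *v x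
      = matrix_inv (mprod M k l) *v (matrix_inv (M (Suc k)) *v x)" for l
    by (simp add: matrix_inv_mult M invertible_mprod matrix_vector_mul_assoc)
  then show ?thesis
    by (simp add: Gamma_form mprod_self matrix_mul_rid matrix_inv_mat_1 matrix_vector_mul_lid
        matrix_vector_mult_add_rdistrib inner_add_right)
qed

subsection \<open>The covariance recursion\<close>

lemma Pseq_Suc_analysis_cov:
  "Pseq M H R P0 (Suc k) = M (Suc k) ** analysis_cov (Pseq M H R P0 k) (Omega H R k)
     ** transpose (M (Suc k))"
  by (simp add: analysis_cov_def matrix_mul_assoc)

lemma Pseq_invariant:
  assumes M: "\<And>j. j \<ge> 1 \<Longrightarrow> invertible (M j)"
    and R: "\<And>j. pos_def (R j)"
    and P0: "pos_semidef P0"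
  shows "pos_semidef (Pseq M H R P0 k)
     \<and> loewner_le (Pseq M H R P0 k) (mprod M k 0 ** P0 ** transpose (mprod M k 0))
     \<and> loewner_le (Pseq M H R P0 k ** Gamma M H R k ** Pseq M H R P0 k) (Pseq M H R P0 k)"
proof (induction k)
  case 0
  have "Gamma M H R 0 = 0" by (simp add: Gamma_def)
  then show ?case
    using P0 by (simp add: loewner_le_def pos_semidef_def)
next
  case (Suc k)
  define P Om A Mk where "P = Pseq M H R P0 k" and "Om = Omega H R k"
    and "A = analysis_cov P Om" and "Mk = M (Suc k)"
  have P: "pos_semidef P" and P_le: "loewner_le P (mprod M k 0 ** P0 ** transpose (mprod M k 0))"
    and P_info: "loewner_le (P ** Gamma M H R k ** P) P"
    using Suc.IH by (simp_all add: P_def)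
  have Om: "pos_semidef Om"
    using pos_semidef_Omega[OF R] by (simp add: Om_def)
  have P': "Pseq M H R P0 (Suc k) = Mk ** A ** transpose Mk"
    unfolding P_def Om_def A_def Mk_def by (rule Pseq_Suc_analysis_cov)
  have "loewner_le (Mk ** A ** transpose Mk)
      (Mk ** (mprod M k 0 ** P0 ** transpose (mprod M k 0)) ** transpose Mk)"
    using loewner_le_trans[OF analysis_cov_le[OF P Om] P_le] unfolding A_def
    by (rule loewner_le_congruence)
  moreover have "Mk ** (mprod M k 0 ** P0 ** transpose (mprod M k 0)) ** transpose Mk
      = mprod M (Suc k) 0 ** P0 ** transpose (mprod M (Suc k) 0)"
    by (simp add: Mk_def matrix_transpose_mul matrix_mul_assoc)
  moreover have "loewner_le (Mk ** A ** transpose Mk ** Gamma M H R (Suc k) ** (Mk ** A ** transpose Mk))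
      (Mk ** A ** transpose Mk)"
    using pos_semidef_analysis_cov[OF P Om] analysis_cov_information[OF P Om P_info]
    by (intro forecast_information) (simp_all add: A_def Mk_def Om_def M Gamma_Suc_form pos_semidef_def)
  ultimately show ?case
    using pos_semidef_congruence[OF pos_semidef_analysis_cov[OF P Om], of Mk]
    unfolding P' A_def by simp
qed

subsection \<open>From the information inequality to an inverse bound\<close>

lemma loewner_le_matrix_inv_of_information:
  fixes P G :: "real^'n^'n"
  assumes P: "pos_semidef P" and G: "pos_semidef G" "invertible G"
    and info: "loewner_le (P ** G ** P) P"
  shows "loewner_le P (matrix_inv G)"
  unfolding loewner_le_def
proof
  fix x
  define a b where "a = x \<bullet> (P *v x)" and "b = x \<bullet> (matrix_inv G *v x)"
  have a0: "0 \<le> a" and b0: "0 \<le> b"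
    using P pos_semidef_matrix_inv[OF G] by (simp_all add: a_def b_def pos_semidef_def)
  have "a = (P *v x) \<bullet> (G *v (matrix_inv G *v x))"
    by (simp add: a_def matrix_inv_vector_cancel G inner_commute)
  moreover have "b = (matrix_inv G *v x) \<bullet> (G *v (matrix_inv G *v x))"
    by (simp add: b_def matrix_inv_vector_cancel G inner_commute)
  ultimately have "a\<^sup>2 \<le> ((P *v x) \<bullet> (G *v (P *v x))) * b"
    using pos_semidef_cauchy_schwarz[OF G(1), of "P *v x" "matrix_inv G *v x"] by simp
  also have "\<dots> \<le> a * b"
    using info P b0 by (intro mult_right_mono) (simp_all add: a_def loewner_le_def
        quadratic_form_sandwich pos_semidef_def)
  finally have "a * a \<le> a * b"
    by (simp add: power2_eq_square)
  then have "a \<le> b"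
    using a0 b0 by (metis mult_strict_left_mono not_le order.strict_trans2 not_less)
  then show "x \<bullet> (P *v x) \<le> x \<bullet> (matrix_inv G *v x)"
    by (simp add: a_def b_def)
qed

theorem mainTheorem3:
  fixes M :: "nat \<Rightarrow> real^'n^'n" and H :: "nat \<Rightarrow> real^'n^'d"
    and R :: "nat \<Rightarrow> real^'d^'d" and P0 :: "real^'n^'n" and k :: nat
  assumes M_inv: "\<And>j. j \<ge> 1 \<Longrightarrow> invertible (M j)"
    and R_pd: "\<And>j. pos_def (R j)"
    and P0_psd: "pos_semidef P0"
  shows "(det (Gamma M H R k) \<noteq> 0 \<longrightarrow>
            loewner_le (Pseq M H R P0 k) (matrix_inv (Gamma M H R k))
          \<and> (\<forall>x::real^'n. x \<bullet> (Pseq M H R P0 k *v x)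
                \<le> min (x \<bullet> ((mprod M k 0 ** P0 ** transpose (mprod M k 0)) *v x))
                      (x \<bullet> (matrix_inv (Gamma M H R k) *v x))))
      \<and> (\<forall>L. pos_def L \<and> loewner_le L (Gamma M H R k)
              \<longrightarrow> loewner_le (Pseq M H R P0 k) (matrix_inv L))"
proof -
  define P G where "P = Pseq M H R P0 k" and "G = Gamma M H R k"
  have P: "pos_semidef P" and P_le: "loewner_le P (mprod M k 0 ** P0 ** transpose (mprod M k 0))"
    and P_info: "loewner_le (P ** G ** P) P"
    using Pseq_invariant[OF M_inv R_pd P0_psd] by (simp_all add: P_def G_def)
  have G: "pos_semidef G"
    using pos_semidef_Gamma[OF R_pd] by (simp add: G_def)
  have "loewner_le P (matrix_inv G)" if "det G \<noteq> 0"
    using loewner_le_matrix_inv_of_information[OF P G _ P_info] that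
    by (simp add: invertible_det_nz)
  moreover have "loewner_le P (matrix_inv L)" if L: "pos_def L" "loewner_le L G" for L
  proof -
    have "transpose P = P"
      using P by (simp add: pos_semidef_def sym_mat_def)
    then have "loewner_le (P ** L ** P) P"
      using loewner_le_congruence[OF L(2), of P] loewner_le_trans P_info by metis
    then show ?thesis
      using loewner_le_matrix_inv_of_information[OF P pos_def_imp_pos_semidef pos_def_invertible]
        L(1) by blast
  qed
  ultimately show ?thesis
    using P_le by (simp add: P_def G_def loewner_le_def)
qed

end
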